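(* Let $\mathcal{S}$ be a concurrent game structure with state set $St$, $A\subseteq Ag$, $\varphi'$ an rATL state formula, $s\in St$ and $t\in\mathbb{B}_4$. For $u\in\mathbb{B}_4$ let $\mathrm{Sat}(\varphi',u)=\{s'\in St\mid V(s',\varphi')\succeq u\}$. Then: (a) $V(s,\langle\!\langle A\rangle\!\rangle\dot\bigcirc\varphi')\succeq t$ iff Player 1 has a winning strategy for $(\mathcal{S}_A,\mathrm{Next}(\mathrm{Sat}(\varphi',t)))$ from $s$; (b) $V(s,\langle\!\langle A\rangle\!\rangle\dot\Diamond\varphi')\succeq t$ iff Player 1 has a winning strategy for $(\mathcal{S}_A,\mathrm{Reach}(\mathrm{Sat}(\varphi',t)))$ from $s$; (c) $V(s,\langle\!\langle A\rangle\!\rangle\dot\Box\varphi')\succeq 1111$ iff Player 1 wins $(\mathcal{S}_A,\mathrm{Safety}(\mathrm{Sat}(\varphi',1111)))$ from $s$; (d) $V(s,\langle\!\langle A\rangle\!\rangle\dot\Box\varphi')\succeq 0111$ iff Player 1 wins $(\mathcal{S}_A,\mathrm{coB\ddot uchi}(\mathrm{Sat}(\varphi',0111)))$ from $s$; (e) $V(s,\langle\!\langle A\rangle\!\rangle\dot\Box\varphi')\succeq 0011$ iff Player 1 wins $(\mathcal{S}_A,\mathrm{B\ddot uchi}(\mathrm{Sat}(\varphi',0011)))$ from $s$; (f) $V(s,\langle\!\langle A\rangle\!\rangle\dot\Box\varphi')\succeq 0001$ iff Player 1 wins $(\mathcal{S}_A,\mathrm{Reach}(\mathrm{Sat}(\varphi',0001)))$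 from $s$; (g) $V(s,[\![A]\!]\dot\bigcirc\varphi')\succeq t$ iff Player 1 does not have a winning strategy for $(\mathcal{S}_A,\mathrm{Next}(St\setminus\mathrm{Sat}(\varphi',t)))$ from $s$.
   Context: Fix a finite set $\mathrm{AP}$ of atomic propositions. A concurrent game structure (CGS) is a tuple $\mathcal{S}=(St,Ag,Ac,\delta,\ell)$ where $St$ is a finite set of states, $Ag$ a finite set of agents, $Ac$ a finite set of actions, $\ell:St\to 2^{\mathrm{AP}}$ a labeling, and $\delta:St\times AV\to St$ a transition function, where $AV$ is the set of action vectors for $Ag$ (an action vector for $A\subseteq Ag$ is a map $A\to Ac$). A state $s'$ is a successor of $s$ if $s'=\delta(s,v)$ for some $v\in AV$. A path is an infinite sequence $\pi=s_0s_1s_2\cdots$ of states with $s_{n+1}$ a successor of $s_n$ for all $n$; write $\pi[n]=s_n$. A strategy for an agent is a function $f:St^+\to Ac$. For $A\subseteq Ag$ and a set $F_A=\{f_a\mid a\in A\}$ of strategies, one for each agent in $A$, $out(s,F_A)$ is the set of paths $s_0s_1\cdots$ with $s_0=s$ such that for every $n\ge 0$ there is $v\in AV$ with $v(a)=f_a(s_0\cdots s_n)$ for all $a\in A$ and $s_{n+1}=\delta(s_n,v)$. $\mathbb{B}_4=\{1111,0111,0011,0001,0000\}$ is totally ordered by $1111\succ0111\succ0011\succ0001\succ0000$; for $b=b_1b_2b_3b_4\in\mathbb{B}_4$ and $k\in\{1,2,3,4\}$, $b[k]=b_k$; max and min on $\mathbb{B}_4$ refer to this order, and on bits to $0<1$.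 rATL formulas: state formulas $\varphi ::= p \mid \neg\varphi\mid\varphi\vee\varphi\mid\varphi\wedge\varphi\mid\varphi\to\varphi\mid\langle\!\langle A\rangle\!\rangle\Phi\mid[\![A]\!]\Phi$ and path formulas $\Phi::=\dot{\bigcirc}\varphi\mid\dot\Diamond\varphi\mid\dot\Box\varphi$, with $p\in\mathrm{AP}$ and $A\subseteq Ag$; an rATL formula is a state formula. On a CGS the valuation $V$ maps (state, state formula) and (path, path formula) pairs to $\mathbb{B}_4$: $V(s,p)=1111$ if $p\in\ell(s)$ and $0000$ otherwise; $V(s,\varphi_1\vee\varphi_2)=\max(V(s,\varphi_1),V(s,\varphi_2))$; $V(s,\varphi_1\wedge\varphi_2)=\min(V(s,\varphi_1),V(s,\varphi_2))$; $V(s,\neg\varphi)=0000$ if $V(s,\varphi)=1111$ and $1111$ otherwise; $V(s,\varphi_1\to\varphi_2)=1111$ if $V(s,\varphi_1)\preceq V(s,\varphi_2)$ and $V(s,\varphi_2)$ otherwise; $V(s,\langle\!\langle A\rangle\!\rangle\Phi)$ is the maximal $b\in\mathbb{B}_4$ such that there is a set $F_A$ of strategies (one per agent in $A$) with $V(\pi,\Phi)\succeq b$ for all $\pi\in out(s,F_A)$; $V(s,[\![A]\!]\Phi)$ is the maximal $b\in\mathbb{B}_4$ such that for every such $F_A$ there is $\pi\in out(s,F_A)$ with $V(\pi,\Phi)\succeq b$. For paths: $V(\pi,\dot\bigcirc\varphi)[k]=V(\pi[1],\varphi)[k]$; $V(\pi,\dot\Diamond\varphi)[k]=\max_{i\ge0}V(\pi[i],\varphi)[k]$;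 $V(\pi,\dot\Box\varphi)=b_1b_2b_3b_4$ with $b_1=\min_{i\ge0}V(\pi[i],\varphi)[1]$, $b_2=\max_{i\ge0}\min_{j\ge i}V(\pi[j],\varphi)[2]$, $b_3=\min_{i\ge0}\max_{j\ge i}V(\pi[j],\varphi)[3]$, $b_4=\max_{i\ge0}V(\pi[i],\varphi)[4]$. Two-player games: a game structure $(St,St_1,St_2,Ac_1,Ac_2,\delta)$ with $St=St_1\uplus St_2$ and $\delta:(St_1\times Ac_1)\cup(St_2\times Ac_2)\to St$; a Player 1 strategy is $f:St^*St_1\to Ac_1$; outcomes of $f$ from $s$ are paths starting in $s$ following $\delta$ and using $f$ at Player 1 states; $f$ is winning for $\mathrm{Win}\subseteq St^\omega$ from $s$ if all its outcomes from $s$ lie in $\mathrm{Win}$. $\mathcal{S}_A=(St\cup(St\times Ac_1),St,St\times Ac_1,Ac_1,Ac_2,\delta')$ where $Ac_1$ (resp. $Ac_2$) is the set of action vectors for $A$ (resp. $Ag\setminus A$), $\delta'(s,v)=(s,v)$, $\delta'((s,v),v')=\delta(s,v\oplus v')$ with $v\oplus v'$ the combined action vector for $Ag$. For $F\subseteq St$, as subsets of $(St\cdot(St\times Ac_1))^\omega$ with paths $s_0s_1s_2\cdots$: $\mathrm{Next}(F)$: $s_2\in F$; $\mathrm{Reach}(F)$: $s_n\in F$ for some even $n$; $\mathrm{Safety}(F)$: $s_n\in F$ for all even $n$; $\mathrm{B\ddot uchi}(F)$: $s_n\in F$ for infinitely many even $n$; $\mathrm{coB\ddot uchi}(F)$: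 $s_n\in F$ for all but finitely many even $n$. *)

theory Defs
  imports "HOL-Library.FuncSet"
begin

datatype b4 = B1111 | B0111 | B0011 | B0001 | B0000

fun b4_rank :: "b4 \<Rightarrow> nat" where
  "b4_rank B0000 = 0" | "b4_rank B0001 = 1" | "b4_rank B0011 = 2"
| "b4_rank B0111 = 3" | "b4_rank B1111 = 4"

lemma b4_rank_inj: "b4_rank x = b4_rank y \<Longrightarrow> x = y"
  by (cases x; cases y) auto

instantiation b4 :: linorder
begin
definition less_eq_b4 :: "b4 \<Rightarrow> b4 \<Rightarrow> bool" where
  "less_eq_b4 x y \<longleftrightarrow> b4_rank x \<le> b4_rank y"
definition less_b4 :: "b4 \<Rightarrow> b4 \<Rightarrow> bool" where
  "less_b4 x y \<longleftrightarrow> b4_rank x < b4_rank y"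
instance
  by standard (auto simp: less_eq_b4_def less_b4_def intro: b4_rank_inj)
end

fun b4_bit :: "b4 \<Rightarrow> nat \<Rightarrow> bool" where
  "b4_bit B1111 k = (k \<in> {1,2,3,4})"
| "b4_bit B0111 k = (k \<in> {2,3,4})"
| "b4_bit B0011 k = (k \<in> {3,4})"
| "b4_bit B0001 k = (k \<in> {4})"
| "b4_bit B0000 k = False"

definition b4_of_bits :: "(nat \<Rightarrow> bool) \<Rightarrow> b4" where
  "b4_of_bits f = (THE b. \<forall>k\<in>{1,2,3,4::nat}. b4_bit b k = f k)"

record ('s, 'ag, 'ac, 'p) cgs =
  cSt :: "'s set"
  cAg :: "'ag set"
  cAc :: "'ac set"
  cdelta :: "'s \<Rightarrow> ('ag \<Rightarrow> 'ac) \<Rightarrow> 's"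
  clab :: "'s \<Rightarrow> 'p set"

definition actvecs :: "('s, 'ag, 'ac, 'p) cgs \<Rightarrow> 'ag set \<Rightarrow> ('ag \<Rightarrow> 'ac) set" where
  "actvecs G A = (A \<rightarrow>\<^sub>E cAc G)"

definition cgs_wf :: "('s, 'ag, 'ac, 'p) cgs \<Rightarrow> bool" where
  "cgs_wf G \<longleftrightarrow> finite (cSt G) \<and> finite (cAg G) \<and> finite (cAc G) \<and> cAc G \<noteq> {}
     \<and> (\<forall>q\<in>cSt G. \<forall>v\<in>actvecs G (cAg G). cdelta G q v \<in> cSt G)"

definition strats :: "('s, 'ag, 'ac, 'p) cgs \<Rightarrow> 'ag set \<Rightarrow> ('ag \<Rightarrow> 's list \<Rightarrow> 'ac) \<Rightarrow> bool" where
  "strats G A F \<longleftrightarrow> (\<forall>a\<in>A. \<forall>h. h \<noteq> [] \<and> set h \<subseteq> cSt G \<longrightarrow> F a h \<in> cAc G)"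

definition out :: "('s, 'ag, 'ac, 'p) cgs \<Rightarrow> 's \<Rightarrow> 'ag set \<Rightarrow> ('ag \<Rightarrow> 's list \<Rightarrow> 'ac)
    \<Rightarrow> (nat \<Rightarrow> 's) set" where
  "out G s A F = {\<pi>. \<pi> 0 = s \<and> (\<forall>n. \<exists>v\<in>actvecs G (cAg G).
      (\<forall>a\<in>A. v a = F a (map \<pi> [0..<Suc n])) \<and> \<pi> (Suc n) = cdelta G (\<pi> n) v)}"

datatype ('p, 'ag) sform =
    Prop 'p
  | Neg "('p, 'ag) sform"
  | Or "('p, 'ag) sform" "('p, 'ag) sform"
  | And "('p, 'ag) sform" "('p, 'ag) sform"
  | Imp "('p, 'ag) sform" "('p, 'ag) sform"
  | Ex "'ag set" "('p, 'ag) pform"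
  | All "'ag set" "('p, 'ag) pform"
and ('p, 'ag) pform =
    Nxt "('p, 'ag) sform"
  | Ev "('p, 'ag) sform"
  | Alw "('p, 'ag) sform"

primrec sf_wf :: "'ag set \<Rightarrow> ('p, 'ag) sform \<Rightarrow> bool"
  and pf_wf :: "'ag set \<Rightarrow> ('p, 'ag) pform \<Rightarrow> bool" where
  "sf_wf Ag (Prop p) = True"
| "sf_wf Ag (Neg \<phi>) = sf_wf Ag \<phi>"
| "sf_wf Ag (Or \<phi> \<psi>) = (sf_wf Ag \<phi> \<and> sf_wf Ag \<psi>)"
| "sf_wf Ag (And \<phi> \<psi>) = (sf_wf Ag \<phi> \<and> sf_wf Ag \<psi>)"
| "sf_wf Ag (Imp \<phi> \<psi>) = (sf_wf Ag \<phi> \<and> sf_wf Ag \<psi>)"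
| "sf_wf Ag (Ex A \<Phi>) = (A \<subseteq> Ag \<and> pf_wf Ag \<Phi>)"
| "sf_wf Ag (All A \<Phi>) = (A \<subseteq> Ag \<and> pf_wf Ag \<Phi>)"
| "pf_wf Ag (Nxt \<phi>) = sf_wf Ag \<phi>"
| "pf_wf Ag (Ev \<phi>) = sf_wf Ag \<phi>"
| "pf_wf Ag (Alw \<phi>) = sf_wf Ag \<phi>"

primrec Vs :: "('s, 'ag, 'ac, 'p) cgs \<Rightarrow> 's \<Rightarrow> ('p, 'ag) sform \<Rightarrow> b4"
  and Vp :: "('s, 'ag, 'ac, 'p) cgs \<Rightarrow> (nat \<Rightarrow> 's) \<Rightarrow> ('p, 'ag) pform \<Rightarrow> b4" where
  "Vs G s (Prop p) = (if p \<in> clab G s then B1111 else B0000)"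
| "Vs G s (Neg \<phi>) = (if Vs G s \<phi> = B1111 then B0000 else B1111)"
| "Vs G s (Or \<phi> \<psi>) = max (Vs G s \<phi>) (Vs G s \<psi>)"
| "Vs G s (And \<phi> \<psi>) = min (Vs G s \<phi>) (Vs G s \<psi>)"
| "Vs G s (Imp \<phi> \<psi>) = (if Vs G s \<phi> \<le> Vs G s \<psi> then B1111 else Vs G s \<psi>)"
| "Vs G s (Ex A \<Phi>) = (GREATEST b. \<exists>F. strats G A F \<and> (\<forall>\<pi>\<in>out G s A F. Vp G \<pi> \<Phi> \<ge> b))"
| "Vs G s (All A \<Phi>) = (GREATEST b. \<forall>F. strats G A F \<longrightarrow> (\<exists>\<pi>\<in>out G s A F. Vp G \<pi> \<Phi> \<ge> b))"
| "Vp G \<pi> (Nxt \<phi>) = b4_of_bits (\<lambda>k. b4_bit (Vs G (\<pi> 1) \<phi>) k)"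
| "Vp G \<pi> (Ev \<phi>) = b4_of_bits (\<lambda>k. \<exists>i. b4_bit (Vs G (\<pi> i) \<phi>) k)"
| "Vp G \<pi> (Alw \<phi>) = b4_of_bits (\<lambda>k.
      if k = 1 then (\<forall>i. b4_bit (Vs G (\<pi> i) \<phi>) 1)
      else if k = 2 then (\<exists>i. \<forall>j\<ge>i. b4_bit (Vs G (\<pi> j) \<phi>) 2)
      else if k = 3 then (\<forall>i. \<exists>j\<ge>i. b4_bit (Vs G (\<pi> j) \<phi>) 3)
      else (\<exists>i. b4_bit (Vs G (\<pi> i) \<phi>) 4))"

definition Sat :: "('s, 'ag, 'ac, 'p) cgs \<Rightarrow> ('p, 'ag) sform \<Rightarrow> b4 \<Rightarrow> 's set" where
  "Sat G \<phi> u = {s'\<in>cSt G. Vs G s' \<phi> \<ge> u}"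

text \<open>Game states: Inl s for s in St (Player 1), Inr (s, v) for (s, v) in St x Ac_1 (Player 2).\<close>
type_synonym ('s, 'ag, 'ac) gstate = "'s + ('s \<times> ('ag \<Rightarrow> 'ac))"

definition gstates :: "('s, 'ag, 'ac, 'p) cgs \<Rightarrow> 'ag set \<Rightarrow> ('s, 'ag, 'ac) gstate set" where
  "gstates G A = Inl ` cSt G \<union> Inr ` (cSt G \<times> actvecs G A)"

definition merge :: "'ag set \<Rightarrow> ('ag \<Rightarrow> 'ac) \<Rightarrow> ('ag \<Rightarrow> 'ac) \<Rightarrow> ('ag \<Rightarrow> 'ac)" where
  "merge A v v' = (\<lambda>a. if a \<in> A then v a else v' a)"

definition p1strat :: "('s, 'ag, 'ac, 'p) cgs \<Rightarrow> 'ag set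
    \<Rightarrow> (('s, 'ag, 'ac) gstate list \<Rightarrow> ('ag \<Rightarrow> 'ac)) \<Rightarrow> bool" where
  "p1strat G A f \<longleftrightarrow> (\<forall>h. h \<noteq> [] \<and> set h \<subseteq> gstates G A \<and> last h \<in> Inl ` cSt G
      \<longrightarrow> f h \<in> actvecs G A)"

definition outcomes :: "('s, 'ag, 'ac, 'p) cgs \<Rightarrow> 'ag set \<Rightarrow> 's
    \<Rightarrow> (('s, 'ag, 'ac) gstate list \<Rightarrow> ('ag \<Rightarrow> 'ac)) \<Rightarrow> (nat \<Rightarrow> ('s, 'ag, 'ac) gstate) set" where
  "outcomes G A s f = {\<rho>. \<rho> 0 = Inl s \<and> (\<forall>n. case \<rho> n of
       Inl q \<Rightarrow> \<rho> (Suc n) = Inr (q, f (map \<rho> [0..<Suc n]))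
     | Inr (q, v) \<Rightarrow> (\<exists>v'\<in>actvecs G (cAg G - A).
          \<rho> (Suc n) = Inl (cdelta G q (merge A v v'))))}"

definition p1wins :: "('s, 'ag, 'ac, 'p) cgs \<Rightarrow> 'ag set
    \<Rightarrow> (nat \<Rightarrow> ('s, 'ag, 'ac) gstate) set \<Rightarrow> 's \<Rightarrow> bool" where
  "p1wins G A Win s \<longleftrightarrow> (\<exists>f. p1strat G A f \<and> (\<forall>\<rho>\<in>outcomes G A s f. \<rho> \<in> Win))"

definition NextW :: "'s set \<Rightarrow> (nat \<Rightarrow> ('s, 'ag, 'ac) gstate) set" where
  "NextW F = {\<rho>. \<rho> 2 \<in> Inl ` F}"
definition ReachW :: "'s set \<Rightarrow> (nat \<Rightarrow> ('s, 'ag, 'ac) gstate) set" where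
  "ReachW F = {\<rho>. \<exists>n. even n \<and> \<rho> n \<in> Inl ` F}"
definition SafetyW :: "'s set \<Rightarrow> (nat \<Rightarrow> ('s, 'ag, 'ac) gstate) set" where
  "SafetyW F = {\<rho>. \<forall>n. even n \<longrightarrow> \<rho> n \<in> Inl ` F}"
definition BuchiW :: "'s set \<Rightarrow> (nat \<Rightarrow> ('s, 'ag, 'ac) gstate) set" where
  "BuchiW F = {\<rho>. \<forall>N. \<exists>n\<ge>N. even n \<and> \<rho> n \<in> Inl ` F}"
definition coBuchiW :: "'s set \<Rightarrow> (nat \<Rightarrow> ('s, 'ag, 'ac) gstate) set" where
  "coBuchiW F = {\<rho>. \<exists>N. \<forall>n\<ge>N. even n \<longrightarrow> \<rho> n \<in> Inl ` F}"

end

(*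
  A coalition value <<A>>Phi is at least t exactly when some coalition strategy
  makes the path value of Phi at least t on every outcome, and at each threshold
  the robust path value is a qualitative property of the path: the robust next
  and eventually operators are threshold-wise next and reachability, and the four
  bits of robust always are safety, co-Buchi, Buchi and reachability.  It remains
  to pass between coalition strategies in S and Player 1 strategies in S_A: a
  Player 1 strategy reads its CGS history off the Player 1 positions of the game
  history, a coalition strategy replays the CGS history as the game history that
  the Player 1 strategy generates, and the Player 1 positions of a game outcome
  form an outcome of the CGS and vice versa.
*)
theory Submission
  imports Defs
begin

section \<open>Threshold semantics of rATL\<close>

lemma UNIV_b4: "(UNIV :: b4 set) = {B1111, B0111, B0011, B0001, B0000}"
proof -
  have "b \<in> {B1111, B0111, B0011, B0001, B0000}" for b
    by (cases b) simp_all
  then show ?thesis by blast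
qed

instance b4 :: finite
  by standard (simp add: UNIV_b4)

lemma le_Greatest_iff:
  fixes t :: "'a::linorder"
  assumes "finite {x. P x}" and "P b"
    and down: "\<And>x y. P y \<Longrightarrow> x \<le> y \<Longrightarrow> P x"
  shows "t \<le> Greatest P \<longleftrightarrow> P t"
proof -
  have P_Max: "P (Max {x. P x})"
    using Max_in[OF assms(1)] \<open>P b\<close> by blast
  have Greatest_Max: "Greatest P = Max {x. P x}"
    by (rule Greatest_equality[of P, OF P_Max]) (simp add: assms(1))
  show ?thesis
    unfolding Greatest_Max using P_Max down Max_ge[OF assms(1)] by blast
qed

lemma b4_eqI:
  assumes "\<And>k. k \<in> {1,2,3,4::nat} \<Longrightarrow> b4_bit c k = b4_bit d k"
  shows "c = d"
  using assms[of 1] assms[of 2] assms[of 3] assms[of 4] by (cases c; cases d) simp_all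

lemma b4_bit_b4_of_bits:
  assumes "f 1 \<Longrightarrow> f 2" "f 2 \<Longrightarrow> f 3" "f 3 \<Longrightarrow> f 4" and "k \<in> {1,2,3,4::nat}"
  shows "b4_bit (b4_of_bits f) k = f k"
proof -
  define b where "b = (if f 1 then B1111 else if f 2 then B0111 else if f 3 then B0011
     else if f 4 then B0001 else B0000)"
  have bits_b: "\<forall>k\<in>{1,2,3,4::nat}. b4_bit b k = f k"
    using assms(1-3) unfolding b_def by auto
  have "b4_of_bits f = b"
    unfolding b4_of_bits_def by (rule the_equality) (metis b4_eqI bits_b)+
  then show ?thesis using bspec[OF bits_b assms(4)] by simp
qed

lemma b4_bit_mono: "b4_bit b 1 \<Longrightarrow> b4_bit b 2" "b4_bit b 2 \<Longrightarrow> b4_bit b 3"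
  "b4_bit b 3 \<Longrightarrow> b4_bit b 4"
  by (cases b; simp)+

lemma b4_le_iff_bit: "B1111 \<le> b \<longleftrightarrow> b4_bit b 1" "B0111 \<le> b \<longleftrightarrow> b4_bit b 2"
  "B0011 \<le> b \<longleftrightarrow> b4_bit b 3" "B0001 \<le> b \<longleftrightarrow> b4_bit b 4" "B0000 \<le> b"
  by (cases b; simp add: less_eq_b4_def)+

lemma b4_of_bits_b4_bit: "b4_of_bits (b4_bit b) = b"
  by (rule b4_eqI, rule b4_bit_b4_of_bits) (simp_all add: b4_bit_mono)

lemma Vp_Nxt: "Vp G \<pi> (Nxt \<phi>) = Vs G (\<pi> 1) \<phi>"
  by (simp add: b4_of_bits_b4_bit)

lemma le_Vp_Ev_iff: "t \<le> Vp G \<pi> (Ev \<phi>) \<longleftrightarrow> (\<exists>i. t \<le> Vs G (\<pi> i) \<phi>)"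
proof -
  have bits: "b4_bit (Vp G \<pi> (Ev \<phi>)) k = (\<exists>i. b4_bit (Vs G (\<pi> i) \<phi>) k)"
    if "k \<in> {1,2,3,4}" for k
    unfolding Vp.simps by (rule b4_bit_b4_of_bits[OF _ _ _ that]) (meson b4_bit_mono)+
  show ?thesis by (cases t) (simp_all add: b4_le_iff_bit bits del: Vp.simps)
qed

lemma le_Vp_Alw_iff:
  "B1111 \<le> Vp G \<pi> (Alw \<phi>) \<longleftrightarrow> (\<forall>i. B1111 \<le> Vs G (\<pi> i) \<phi>)"
  "B0111 \<le> Vp G \<pi> (Alw \<phi>) \<longleftrightarrow> (\<exists>i. \<forall>j\<ge>i. B0111 \<le> Vs G (\<pi> j) \<phi>)"
  "B0011 \<le> Vp G \<pi> (Alw \<phi>) \<longleftrightarrow> (\<forall>i. \<exists>j\<ge>i. B0011 \<le> Vs G (\<pi> j) \<phi>)"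
  "B0001 \<le> Vp G \<pi> (Alw \<phi>) \<longleftrightarrow> (\<exists>i. B0001 \<le> Vs G (\<pi> i) \<phi>)"
proof -
  let ?bit = "\<lambda>k i. b4_bit (Vs G (\<pi> i) \<phi>) k"
  define f where "f k = (if k = 1 then (\<forall>i. ?bit 1 i)
      else if k = 2 then (\<exists>i. \<forall>j\<ge>i. ?bit 2 j)
      else if k = 3 then (\<forall>i. \<exists>j\<ge>i. ?bit 3 j)
      else (\<exists>i. ?bit 4 i))" for k :: nat
  have Vp_f: "Vp G \<pi> (Alw \<phi>) = b4_of_bits f"
    unfolding f_def by simp
  have "f 1 \<Longrightarrow> f 2"
    unfolding f_def by (auto intro!: exI[of _ 0] b4_bit_mono(1))
  moreover have "f 2 \<Longrightarrow> f 3"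
    unfolding f_def by simp (meson b4_bit_mono nat_le_linear order_trans)
  moreover have "f 3 \<Longrightarrow> f 4"
    unfolding f_def by simp (meson b4_bit_mono le0)
  ultimately have bit_Vp: "b4_bit (Vp G \<pi> (Alw \<phi>)) k = f k" if "k \<in> {1,2,3,4}" for k
    unfolding Vp_f using that by (rule b4_bit_b4_of_bits)
  have bits: "b4_bit (Vp G \<pi> (Alw \<phi>)) 1 = f 1" "b4_bit (Vp G \<pi> (Alw \<phi>)) 2 = f 2"
    "b4_bit (Vp G \<pi> (Alw \<phi>)) 3 = f 3" "b4_bit (Vp G \<pi> (Alw \<phi>)) 4 = f 4"
    by (rule bit_Vp; simp)+
  show "B1111 \<le> Vp G \<pi> (Alw \<phi>) \<longleftrightarrow> (\<forall>i. B1111 \<le> Vs G (\<pi> i) \<phi>)"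
    unfolding b4_le_iff_bit bits f_def by simp
  show "B0111 \<le> Vp G \<pi> (Alw \<phi>) \<longleftrightarrow> (\<exists>i. \<forall>j\<ge>i. B0111 \<le> Vs G (\<pi> j) \<phi>)"
    unfolding b4_le_iff_bit bits f_def by simp
  show "B0011 \<le> Vp G \<pi> (Alw \<phi>) \<longleftrightarrow> (\<forall>i. \<exists>j\<ge>i. B0011 \<le> Vs G (\<pi> j) \<phi>)"
    unfolding b4_le_iff_bit bits f_def by simp
  show "B0001 \<le> Vp G \<pi> (Alw \<phi>) \<longleftrightarrow> (\<exists>i. B0001 \<le> Vs G (\<pi> i) \<phi>)"
    unfolding b4_le_iff_bit bits f_def by simp
qed

declare Vp.simps [simp del]

lemma le_Vs_Ex_iff:
  assumes "cgs_wf G"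
  shows "t \<le> Vs G s (Ex A \<Phi>) \<longleftrightarrow> (\<exists>F. strats G A F \<and> (\<forall>\<pi>\<in>out G s A F. t \<le> Vp G \<pi> \<Phi>))"
proof -
  obtain c where "c \<in> cAc G"
    using assms unfolding cgs_wf_def by blast
  then have "strats G A (\<lambda>a h. c)"
    unfolding strats_def by simp
  then show ?thesis
    unfolding Vs.simps
    by (intro le_Greatest_iff[where b = B0000]) (auto simp: b4_le_iff_bit intro: order_trans)
qed

lemma out_in_states:
  assumes "cgs_wf G" "s \<in> cSt G" "\<pi> \<in> out G s A F"
  shows "\<pi> n \<in> cSt G"
proof (induction n)
  case 0
  then show ?case using assms unfolding out_def by simp
next
  case (Suc n)
  from assms(3) obtain v where "v \<in> actvecs G (cAg G)" "\<pi> (Suc n) = cdelta G (\<pi> n) v"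
    unfolding out_def by blast
  then show ?case using Suc assms(1) unfolding cgs_wf_def by simp
qed

lemma out_nonempty:
  assumes wf: "cgs_wf G" and "A \<subseteq> cAg G" "s \<in> cSt G" "strats G A F"
  obtains \<pi> where "\<pi> \<in> out G s A F"
proof -
  obtain c where c: "c \<in> cAc G"
    using wf unfolding cgs_wf_def by blast
  define vec where "vec h = (\<lambda>a. if a \<in> A then F a h else if a \<in> cAg G then c else undefined)"
    for h
  have vec_in: "vec h \<in> actvecs G (cAg G)" if "h \<noteq> []" "set h \<subseteq> cSt G" for h
    using that assms c unfolding vec_def actvecs_def strats_def by auto
  define hist where "hist = rec_nat [s] (\<lambda>n h. h @ [cdelta G (last h) (vec h)])"
  define \<pi> where "\<pi> n = last (hist n)" for n
  have \<pi>_Suc: "\<pi> (Suc n) = cdelta G (\<pi> n) (vec (hist n))" for n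
    unfolding \<pi>_def hist_def by simp
  have hist: "hist n = map \<pi> [0..<Suc n] \<and> set (hist n) \<subseteq> cSt G" for n
  proof (induction n)
    case 0
    then show ?case using \<open>s \<in> cSt G\<close> unfolding \<pi>_def hist_def by simp
  next
    case (Suc n)
    have "hist (Suc n) = hist n @ [\<pi> (Suc n)]"
      unfolding \<pi>_def hist_def by simp
    moreover have "\<pi> (Suc n) \<in> cSt G"
      using wf vec_in Suc unfolding \<pi>_Suc cgs_wf_def by auto
    ultimately show ?case using Suc by auto
  qed
  have "\<pi> \<in> out G s A F"
    unfolding out_def
  proof (intro CollectI conjI allI)
    show "\<pi> 0 = s"
      unfolding \<pi>_def hist_def by simp
    show "\<exists>v\<in>actvecs G (cAg G). (\<forall>a\<in>A. v a = F a (map \<pi> [0..<Suc n]))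
        \<and> \<pi> (Suc n) = cdelta G (\<pi> n) v" for n
    proof (intro bexI conjI)
      show "vec (hist n) \<in> actvecs G (cAg G)"
        using hist[of n] by (intro vec_in) auto
      show "\<forall>a\<in>A. vec (hist n) a = F a (map \<pi> [0..<Suc n])"
        using hist[of n] by (simp add: vec_def)
    qed (rule \<pi>_Suc)
  qed
  then show thesis by (rule that)
qed

lemma le_Vs_All_iff:
  assumes "cgs_wf G" "A \<subseteq> cAg G" "s \<in> cSt G"
  shows "t \<le> Vs G s (All A \<Phi>) \<longleftrightarrow> (\<forall>F. strats G A F \<longrightarrow> (\<exists>\<pi>\<in>out G s A F. t \<le> Vp G \<pi> \<Phi>))"
  unfolding Vs.simps
proof (rule le_Greatest_iff[where b = B0000])
  show "\<forall>F. strats G A F \<longrightarrow> (\<exists>\<pi>\<in>out G s A F. B0000 \<le> Vp G \<pi> \<Phi>)"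
  proof (intro allI impI)
    fix F assume "strats G A F"
    then obtain \<pi> where "\<pi> \<in> out G s A F"
      by (rule out_nonempty[OF assms])
    then show "\<exists>\<pi>\<in>out G s A F. B0000 \<le> Vp G \<pi> \<Phi>"
      using b4_le_iff_bit(5) by blast
  qed
qed (rule finite, meson order_trans)

section \<open>Coalition strategies versus Player 1 strategies in the turn-based game\<close>

definition cgs_path :: "(nat \<Rightarrow> ('s, 'ag, 'ac) gstate) \<Rightarrow> nat \<Rightarrow> 's" where
  "cgs_path \<rho> n = projl (\<rho> (2 * n))"

lemma merge_in_actvecs:
  assumes "A \<subseteq> cAg G" "v \<in> actvecs G A" "v' \<in> actvecs G (cAg G - A)"
  shows "merge A v v' \<in> actvecs G (cAg G)"
  using assms unfolding actvecs_def merge_def PiE_def extensional_def by auto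

lemma outcomes_Inl_step:
  assumes "\<rho> \<in> outcomes G A s f" "\<rho> m = Inl q"
  shows "\<rho> (Suc m) = Inr (q, f (map \<rho> [0..<Suc m]))"
  using assms unfolding outcomes_def by (auto split: sum.splits)

lemma outcomes_Inr_step:
  assumes "\<rho> \<in> outcomes G A s f" "\<rho> m = Inr (q, v)"
  obtains v' where "v' \<in> actvecs G (cAg G - A)" "\<rho> (Suc m) = Inl (cdelta G q (merge A v v'))"
  using assms unfolding outcomes_def by (fastforce split: sum.splits)

lemma outcomes_alternate:
  assumes wf: "cgs_wf G" and AAg: "A \<subseteq> cAg G" and "s \<in> cSt G"
    and f: "p1strat G A f" and \<rho>: "\<rho> \<in> outcomes G A s f"
  shows "\<rho> (2 * n) = Inl (cgs_path \<rho> n) \<and> cgs_path \<rho> n \<in> cSt G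
    \<and> set (map \<rho> [0..<Suc (2 * n)]) \<subseteq> gstates G A \<and> f (map \<rho> [0..<Suc (2 * n)]) \<in> actvecs G A"
proof (induction n)
  case 0
  have "\<rho> 0 = Inl s"
    using \<rho> unfolding outcomes_def by simp
  then show ?case
    using f \<open>s \<in> cSt G\<close> unfolding cgs_path_def p1strat_def gstates_def by simp
next
  case (Suc n)
  let ?h = "map \<rho> [0..<Suc (2 * n)]"
  have Inr: "\<rho> (Suc (2 * n)) = Inr (cgs_path \<rho> n, f ?h)"
    using outcomes_Inl_step[OF \<rho>] Suc by simp
  then obtain v' where v': "v' \<in> actvecs G (cAg G - A)"
    and Inl: "\<rho> (2 * Suc n) = Inl (cdelta G (cgs_path \<rho> n) (merge A (f ?h) v'))"
    by (auto elim: outcomes_Inr_step[OF \<rho>])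
  have "cdelta G (cgs_path \<rho> n) (merge A (f ?h) v') \<in> cSt G"
    using wf merge_in_actvecs[OF AAg _ v'] Suc unfolding cgs_wf_def by blast
  moreover have "map \<rho> [0..<Suc (2 * Suc n)] = ?h @ [\<rho> (Suc (2 * n)), \<rho> (2 * Suc n)]"
    by simp
  ultimately show ?case
    using Suc Inr Inl f unfolding cgs_path_def p1strat_def gstates_def by auto
qed

definition p1strat_of :: "'ag set \<Rightarrow> ('ag \<Rightarrow> 's list \<Rightarrow> 'ac)
    \<Rightarrow> ('s, 'ag, 'ac) gstate list \<Rightarrow> 'ag \<Rightarrow> 'ac" where
  "p1strat_of A F h = restrict (\<lambda>a. F a (map projl (filter isl h))) A"

lemma p1strat_p1strat_of:
  assumes "strats G A F"
  shows "p1strat G A (p1strat_of A F)"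
  unfolding p1strat_def
proof (intro allI impI)
  fix h
  assume h: "h \<noteq> [] \<and> set h \<subseteq> gstates G A \<and> last h \<in> Inl ` cSt G"
  then have "map projl (filter isl h) \<noteq> []"
    by (metis filter_empty_conv last_in_set image_iff isl_def Nil_is_map_conv)
  moreover have "set (map projl (filter isl h)) \<subseteq> cSt G"
    using h unfolding gstates_def by auto
  ultimately show "p1strat_of A F h \<in> actvecs G A"
    using assms unfolding p1strat_of_def actvecs_def strats_def by auto
qed

lemma cgs_path_in_out:
  assumes wf: "cgs_wf G" and AAg: "A \<subseteq> cAg G" and s: "s \<in> cSt G"
    and F: "strats G A F" and \<rho>: "\<rho> \<in> outcomes G A s (p1strat_of A F)"
  shows "cgs_path \<rho> \<in> out G s A F"
  unfolding out_def
proof (intro CollectI conjI allI)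
  let ?f = "p1strat_of A F" and ?\<pi> = "cgs_path \<rho>"
  note alt = outcomes_alternate[OF wf AAg s p1strat_p1strat_of[OF F] \<rho>]
  have Inr: "\<rho> (Suc (2 * n)) = Inr (?\<pi> n, ?f (map \<rho> [0..<Suc (2 * n)]))" for n
    using outcomes_Inl_step[OF \<rho>] alt[of n] by simp
  show "?\<pi> 0 = s"
    using \<rho> unfolding outcomes_def cgs_path_def by simp
  have states: "map projl (filter isl (map \<rho> [0..<Suc (2 * n)])) = map ?\<pi> [0..<Suc n]" for n
  proof (induction n)
    case 0
    then show ?case using alt[of 0] by simp
  next
    case (Suc n)
    have "map \<rho> [0..<Suc (2 * Suc n)] = map \<rho> [0..<Suc (2 * n)] @ [\<rho> (Suc (2 * n)), \<rho> (2 * Suc n)]"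
      by simp
    then have "map projl (filter isl (map \<rho> [0..<Suc (2 * Suc n)]))
        = map ?\<pi> [0..<Suc n] @ [?\<pi> (Suc n)]"
      using Suc.IH Inr[of n] alt[of "Suc n"] by (simp del: upt_Suc)
    then show ?case by simp
  qed
  fix n
  let ?v = "?f (map \<rho> [0..<Suc (2 * n)])"
  obtain v' where v': "v' \<in> actvecs G (cAg G - A)"
    and "\<rho> (2 * Suc n) = Inl (cdelta G (?\<pi> n) (merge A ?v v'))"
    using Inr[of n] by (auto elim: outcomes_Inr_step[OF \<rho>])
  then have "?\<pi> (Suc n) = cdelta G (?\<pi> n) (merge A ?v v')"
    unfolding cgs_path_def by simp
  moreover have "\<forall>a\<in>A. merge A ?v v' a = F a (map ?\<pi> [0..<Suc n])"
    using states[of n] unfolding merge_def p1strat_of_def by simp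
  ultimately show "\<exists>v\<in>actvecs G (cAg G). (\<forall>a\<in>A. v a = F a (map ?\<pi> [0..<Suc n]))
      \<and> ?\<pi> (Suc n) = cdelta G (?\<pi> n) v"
    using merge_in_actvecs[OF AAg _ v'] alt[of n] by blast
qed

text \<open>The game history that f generates along a CGS history; the CGS history is given
  newest state first.\<close>

fun lift_history :: "(('s, 'ag, 'ac) gstate list \<Rightarrow> ('ag \<Rightarrow> 'ac)) \<Rightarrow> 's list
    \<Rightarrow> ('s, 'ag, 'ac) gstate list" where
  "lift_history f [] = []"
| "lift_history f [q] = [Inl q]"
| "lift_history f (q # p # r) = lift_history f (p # r) @ [Inr (p, f (lift_history f (p # r))), Inl q]"

definition strats_of :: "(('s, 'ag, 'ac) gstate list \<Rightarrow> ('ag \<Rightarrow> 'ac)) \<Rightarrow> 'ag \<Rightarrow> 's list \<Rightarrow> 'ac" where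
  "strats_of f a h = f (lift_history f (rev h)) a"

definition lift_path :: "(('s, 'ag, 'ac) gstate list \<Rightarrow> ('ag \<Rightarrow> 'ac)) \<Rightarrow> (nat \<Rightarrow> 's)
    \<Rightarrow> nat \<Rightarrow> ('s, 'ag, 'ac) gstate" where
  "lift_path f \<pi> m = (if even m then Inl (\<pi> (m div 2))
     else Inr (\<pi> (m div 2), f (lift_history f (rev (map \<pi> [0..<Suc (m div 2)])))))"

lemma lift_history_in_gstates:
  assumes "p1strat G A f" "r \<noteq> []" "set r \<subseteq> cSt G"
  shows "lift_history f r \<noteq> [] \<and> set (lift_history f r) \<subseteq> gstates G A
    \<and> last (lift_history f r) = Inl (hd r)"
  using assms
proof (induction f r rule: lift_history.induct)
  case (3 f q p r)
  then have IH: "lift_history f (p # r) \<noteq> [] \<and> set (lift_history f (p # r)) \<subseteq> gstates G A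
      \<and> last (lift_history f (p # r)) = Inl p"
    by simp
  moreover have "f (lift_history f (p # r)) \<in> actvecs G A"
    using "3.prems"(1)[unfolded p1strat_def, rule_format, of "lift_history f (p # r)"] IH "3.prems"
    by simp
  ultimately show ?case
    using "3.prems" unfolding gstates_def by auto
qed (auto simp: gstates_def)

lemma strats_strats_of:
  assumes "p1strat G A f"
  shows "strats G A (strats_of f)"
  unfolding strats_def
proof (intro ballI allI impI)
  fix a h assume "a \<in> A" and h: "h \<noteq> [] \<and> set h \<subseteq> cSt G"
  then have "hd (rev h) \<in> cSt G"
    by (metis hd_rev last_in_set subsetD)
  moreover have "lift_history f (rev h) \<noteq> [] \<and> set (lift_history f (rev h)) \<subseteq> gstates G A
      \<and> last (lift_history f (rev h)) = Inl (hd (rev h))"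
    using lift_history_in_gstates[OF assms, of "rev h"] h by simp
  ultimately have "f (lift_history f (rev h)) \<in> actvecs G A"
    using assms[unfolded p1strat_def, rule_format, of "lift_history f (rev h)"] by simp
  then show "strats_of f a h \<in> cAc G"
    using \<open>a \<in> A\<close> unfolding strats_of_def actvecs_def by (rule PiE_mem)
qed

lemma lift_path_even: "lift_path f \<pi> (2 * n) = Inl (\<pi> n)"
  unfolding lift_path_def by simp

lemma lift_path_odd:
  "lift_path f \<pi> (Suc (2 * n)) = Inr (\<pi> n, f (lift_history f (rev (map \<pi> [0..<Suc n]))))"
  unfolding lift_path_def by simp

lemma cgs_path_lift_path: "cgs_path (lift_path f \<pi>) = \<pi>"
  unfolding cgs_path_def lift_path_even by simp

lemma history_lift_path:
  "map (lift_path f \<pi>) [0..<Suc (2 * n)] = lift_history f (rev (map \<pi> [0..<Suc n]))"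
proof (induction n)
  case 0
  then show ?case by (simp add: lift_path_def)
next
  case (Suc n)
  have "map (lift_path f \<pi>) [0..<Suc (2 * Suc n)]
      = map (lift_path f \<pi>) [0..<Suc (2 * n)] @ [lift_path f \<pi> (Suc (2 * n)), lift_path f \<pi> (2 * Suc n)]"
    by simp
  also have "\<dots> = lift_history f (\<pi> n # rev (map \<pi> [0..<n]))
      @ [Inr (\<pi> n, f (lift_history f (\<pi> n # rev (map \<pi> [0..<n])))), Inl (\<pi> (Suc n))]"
    unfolding Suc.IH lift_path_odd lift_path_even by simp
  also have "\<dots> = lift_history f (rev (map \<pi> [0..<Suc (Suc n)]))"
    by simp
  finally show ?case .
qed

lemma lift_path_in_outcomes:
  assumes \<pi>: "\<pi> \<in> out G s A (strats_of f)"
  shows "lift_path f \<pi> \<in> outcomes G A s f"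
  unfolding outcomes_def
proof (intro CollectI conjI allI)
  let ?\<rho> = "lift_path f \<pi>"
  show "?\<rho> 0 = Inl s"
    using \<pi> lift_path_even[of f \<pi> 0] unfolding out_def by simp
  fix m
  consider n where "m = 2 * n" | n where "m = Suc (2 * n)"
    by (cases "even m") (auto elim!: evenE oddE)
  then show "case ?\<rho> m of Inl q \<Rightarrow> ?\<rho> (Suc m) = Inr (q, f (map ?\<rho> [0..<Suc m]))
    | Inr (q, v) \<Rightarrow> \<exists>v'\<in>actvecs G (cAg G - A). ?\<rho> (Suc m) = Inl (cdelta G q (merge A v v'))"
  proof cases
    case 1
    then show ?thesis
      using history_lift_path[of f \<pi> n] by (simp add: lift_path_even lift_path_odd)
  next
    case 2
    from \<pi> obtain w where w: "w \<in> actvecs G (cAg G)"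
      "\<forall>a\<in>A. w a = strats_of f a (map \<pi> [0..<Suc n])" "\<pi> (Suc n) = cdelta G (\<pi> n) w"
      unfolding out_def by blast
    let ?v = "f (lift_history f (rev (map \<pi> [0..<Suc n])))"
    let ?w' = "restrict w (cAg G - A)"
    have "merge A ?v ?w' = w"
      using w(1,2) unfolding merge_def strats_of_def actvecs_def PiE_def extensional_def
      by fastforce
    moreover have "?w' \<in> actvecs G (cAg G - A)"
      using w(1) unfolding actvecs_def by auto
    moreover have "?\<rho> (Suc m) = Inl (\<pi> (Suc n))"
      using 2 lift_path_even[of f \<pi> "Suc n"] by simp
    ultimately show ?thesis
      using 2 w(3) lift_path_odd[of f \<pi> n] by (auto intro!: bexI[of _ ?w'])
  qed
qed

lemma p1wins_iff_strats:
  assumes wf: "cgs_wf G" and AAg: "A \<subseteq> cAg G" and s: "s \<in> cSt G"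
    and Win: "\<And>\<rho>. \<forall>n. isl (\<rho> (2 * n)) \<Longrightarrow> \<rho> \<in> Win \<longleftrightarrow> W (cgs_path \<rho>)"
  shows "p1wins G A Win s \<longleftrightarrow> (\<exists>F. strats G A F \<and> (\<forall>\<pi>\<in>out G s A F. W \<pi>))"
proof
  assume "p1wins G A Win s"
  then obtain f where f: "p1strat G A f" and win: "\<forall>\<rho>\<in>outcomes G A s f. \<rho> \<in> Win"
    unfolding p1wins_def by blast
  have "W \<pi>" if "\<pi> \<in> out G s A (strats_of f)" for \<pi>
  proof -
    have "lift_path f \<pi> \<in> Win"
      using win lift_path_in_outcomes[OF that] by blast
    then show ?thesis
      using Win[of "lift_path f \<pi>"] by (simp add: lift_path_even cgs_path_lift_path)
  qed
  then show "\<exists>F. strats G A F \<and> (\<forall>\<pi>\<in>out G s A F. W \<pi>)"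
    using strats_strats_of[OF f] by blast
next
  assume "\<exists>F. strats G A F \<and> (\<forall>\<pi>\<in>out G s A F. W \<pi>)"
  then obtain F where F: "strats G A F" and win: "\<forall>\<pi>\<in>out G s A F. W \<pi>"
    by blast
  have "\<rho> \<in> Win" if \<rho>: "\<rho> \<in> outcomes G A s (p1strat_of A F)" for \<rho>
  proof -
    have "\<forall>n. isl (\<rho> (2 * n))"
      using outcomes_alternate[OF wf AAg s p1strat_p1strat_of[OF F] \<rho>] by simp
    then show ?thesis
      using Win win cgs_path_in_out[OF wf AAg s F \<rho>] by blast
  qed
  then show "p1wins G A Win s"
    using p1strat_p1strat_of[OF F] unfolding p1wins_def by blast
qed

lemma le_Vs_Ex_iff_p1wins:
  assumes wf: "cgs_wf G" and AAg: "A \<subseteq> cAg G" and s: "s \<in> cSt G"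
    and Vp_iff: "\<And>\<pi>. \<forall>n. \<pi> n \<in> cSt G \<Longrightarrow> t \<le> Vp G \<pi> \<Phi> \<longleftrightarrow> W \<pi>"
    and Win: "\<And>\<rho>. \<forall>n. isl (\<rho> (2 * n)) \<Longrightarrow> \<rho> \<in> Win \<longleftrightarrow> W (cgs_path \<rho>)"
  shows "t \<le> Vs G s (Ex A \<Phi>) \<longleftrightarrow> p1wins G A Win s"
proof -
  have "t \<le> Vp G \<pi> \<Phi> \<longleftrightarrow> W \<pi>" if "\<pi> \<in> out G s A F" for \<pi> F
    using Vp_iff out_in_states[OF wf s that] by blast
  then have "t \<le> Vs G s (Ex A \<Phi>) \<longleftrightarrow> (\<exists>F. strats G A F \<and> (\<forall>\<pi>\<in>out G s A F. W \<pi>))"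
    unfolding le_Vs_Ex_iff[OF wf] by auto
  also have "\<dots> \<longleftrightarrow> p1wins G A Win s"
    using p1wins_iff_strats[OF wf AAg s Win] by simp
  finally show ?thesis .
qed

lemma le_Vs_All_iff_not_p1wins:
  assumes wf: "cgs_wf G" and AAg: "A \<subseteq> cAg G" and s: "s \<in> cSt G"
    and Vp_iff: "\<And>\<pi>. \<forall>n. \<pi> n \<in> cSt G \<Longrightarrow> t \<le> Vp G \<pi> \<Phi> \<longleftrightarrow> \<not> W \<pi>"
    and Win: "\<And>\<rho>. \<forall>n. isl (\<rho> (2 * n)) \<Longrightarrow> \<rho> \<in> Win \<longleftrightarrow> W (cgs_path \<rho>)"
  shows "t \<le> Vs G s (All A \<Phi>) \<longleftrightarrow> \<not> p1wins G A Win s"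
proof -
  have "t \<le> Vp G \<pi> \<Phi> \<longleftrightarrow> \<not> W \<pi>" if "\<pi> \<in> out G s A F" for \<pi> F
    using Vp_iff out_in_states[OF wf s that] by blast
  then have "t \<le> Vs G s (All A \<Phi>) \<longleftrightarrow> \<not> (\<exists>F. strats G A F \<and> (\<forall>\<pi>\<in>out G s A F. W \<pi>))"
    unfolding le_Vs_All_iff[OF wf AAg s] by auto
  also have "\<dots> \<longleftrightarrow> \<not> p1wins G A Win s"
    using p1wins_iff_strats[OF wf AAg s Win] by simp
  finally show ?thesis .
qed

lemma ex_even_iff:
  fixes P :: "nat \<Rightarrow> bool"
  shows "(\<exists>n. even n \<and> P n) \<longleftrightarrow> (\<exists>i. P (2 * i))"
  by (metis evenE dvd_triv_left)

lemma all_even_iff: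
  fixes P :: "nat \<Rightarrow> bool"
  shows "(\<forall>n. even n \<longrightarrow> P n) \<longleftrightarrow> (\<forall>i. P (2 * i))"
  by (metis evenE dvd_triv_left)

lemma frequently_even_iff:
  fixes P :: "nat \<Rightarrow> bool"
  shows "(\<forall>N. \<exists>n\<ge>N. even n \<and> P n) \<longleftrightarrow> (\<forall>i. \<exists>j\<ge>i. P (2 * j))"
proof
  assume freq: "\<forall>N. \<exists>n\<ge>N. even n \<and> P n"
  show "\<forall>i. \<exists>j\<ge>i. P (2 * j)"
  proof
    fix i
    obtain n where "n \<ge> 2 * i" "even n" "P n"
      using freq by blast
    moreover from \<open>even n\<close> obtain j where "n = 2 * j"
      by (rule evenE)
    ultimately show "\<exists>j\<ge>i. P (2 * j)"
      by auto
  qed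
next
  assume freq: "\<forall>i. \<exists>j\<ge>i. P (2 * j)"
  show "\<forall>N. \<exists>n\<ge>N. even n \<and> P n"
  proof
    fix N
    obtain j where "j \<ge> N" "P (2 * j)"
      using freq by blast
    then show "\<exists>n\<ge>N. even n \<and> P n"
      by (intro exI[of _ "2 * j"]) auto
  qed
qed

lemma eventually_even_iff:
  fixes P :: "nat \<Rightarrow> bool"
  shows "(\<exists>N. \<forall>n\<ge>N. even n \<longrightarrow> P n) \<longleftrightarrow> (\<exists>i. \<forall>j\<ge>i. P (2 * j))"
proof
  assume "\<exists>N. \<forall>n\<ge>N. even n \<longrightarrow> P n"
  then obtain N where "\<forall>n\<ge>N. even n \<longrightarrow> P n"
    by blast
  then show "\<exists>i. \<forall>j\<ge>i. P (2 * j)"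
    by (intro exI[of _ N]) auto
next
  assume "\<exists>i. \<forall>j\<ge>i. P (2 * j)"
  then obtain i where ev: "\<forall>j\<ge>i. P (2 * j)"
    by blast
  have "P n" if "n \<ge> 2 * i" "even n" for n
  proof -
    from \<open>even n\<close> obtain j where "n = 2 * j"
      by (rule evenE)
    with that ev show ?thesis
      by auto
  qed
  then show "\<exists>N. \<forall>n\<ge>N. even n \<longrightarrow> P n"
    by blast
qed

lemma
  assumes "\<forall>n. isl (\<rho> (2 * n))"
  shows NextW_iff: "\<rho> \<in> NextW X \<longleftrightarrow> cgs_path \<rho> 1 \<in> X"
    and ReachW_iff: "\<rho> \<in> ReachW X \<longleftrightarrow> (\<exists>i. cgs_path \<rho> i \<in> X)"
    and SafetyW_iff: "\<rho> \<in> SafetyW X \<longleftrightarrow> (\<forall>i. cgs_path \<rho> i \<in> X)"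
    and BuchiW_iff: "\<rho> \<in> BuchiW X \<longleftrightarrow> (\<forall>i. \<exists>j\<ge>i. cgs_path \<rho> j \<in> X)"
    and coBuchiW_iff: "\<rho> \<in> coBuchiW X \<longleftrightarrow> (\<exists>i. \<forall>j\<ge>i. cgs_path \<rho> j \<in> X)"
proof -
  have Inl: "\<rho> (2 * i) \<in> Inl ` X \<longleftrightarrow> cgs_path \<rho> i \<in> X" for i
    using spec[OF assms, of i] unfolding cgs_path_def by (cases "\<rho> (2 * i)") auto
  show "\<rho> \<in> NextW X \<longleftrightarrow> cgs_path \<rho> 1 \<in> X"
    using Inl[of 1] unfolding NextW_def by simp
  show "\<rho> \<in> ReachW X \<longleftrightarrow> (\<exists>i. cgs_path \<rho> i \<in> X)"
    unfolding ReachW_def mem_Collect_eq ex_even_iff Inl ..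
  show "\<rho> \<in> SafetyW X \<longleftrightarrow> (\<forall>i. cgs_path \<rho> i \<in> X)"
    unfolding SafetyW_def mem_Collect_eq all_even_iff Inl ..
  show "\<rho> \<in> BuchiW X \<longleftrightarrow> (\<forall>i. \<exists>j\<ge>i. cgs_path \<rho> j \<in> X)"
    unfolding BuchiW_def mem_Collect_eq frequently_even_iff Inl ..
  show "\<rho> \<in> coBuchiW X \<longleftrightarrow> (\<exists>i. \<forall>j\<ge>i. cgs_path \<rho> j \<in> X)"
    unfolding coBuchiW_def mem_Collect_eq eventually_even_iff Inl ..
qed

theorem mainTheorem4:
  fixes G :: "('s, 'ag, 'ac, 'p) cgs"
    and A :: "'ag set" and \<phi> :: "('p, 'ag) sform" and s :: 's and t :: b4
  assumes "cgs_wf G"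
    and "A \<subseteq> cAg G"
    and "sf_wf (cAg G) \<phi>"
    and "s \<in> cSt G"
  shows "(Vs G s (Ex A (Nxt \<phi>)) \<ge> t \<longleftrightarrow> p1wins G A (NextW (Sat G \<phi> t)) s)
       \<and> (Vs G s (Ex A (Ev \<phi>)) \<ge> t \<longleftrightarrow> p1wins G A (ReachW (Sat G \<phi> t)) s)
       \<and> (Vs G s (Ex A (Alw \<phi>)) \<ge> B1111 \<longleftrightarrow> p1wins G A (SafetyW (Sat G \<phi> B1111)) s)
       \<and> (Vs G s (Ex A (Alw \<phi>)) \<ge> B0111 \<longleftrightarrow> p1wins G A (coBuchiW (Sat G \<phi> B0111)) s)
       \<and> (Vs G s (Ex A (Alw \<phi>)) \<ge> B0011 \<longleftrightarrow> p1wins G A (BuchiW (Sat G \<phi> B0011)) s)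
       \<and> (Vs G s (Ex A (Alw \<phi>)) \<ge> B0001 \<longleftrightarrow> p1wins G A (ReachW (Sat G \<phi> B0001)) s)
       \<and> (Vs G s (All A (Nxt \<phi>)) \<ge> t \<longleftrightarrow>
            \<not> p1wins G A (NextW (cSt G - Sat G \<phi> t)) s)"
proof (intro conjI)
  note Ex_iff = le_Vs_Ex_iff_p1wins[OF assms(1,2,4)]
  show "Vs G s (Ex A (Nxt \<phi>)) \<ge> t \<longleftrightarrow> p1wins G A (NextW (Sat G \<phi> t)) s"
    by (rule Ex_iff[where W = "\<lambda>\<pi>. \<pi> 1 \<in> Sat G \<phi> t"]) (simp_all add: Sat_def Vp_Nxt NextW_iff)
  show "Vs G s (Ex A (Ev \<phi>)) \<ge> t \<longleftrightarrow> p1wins G A (ReachW (Sat G \<phi> t)) s"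
    by (rule Ex_iff[where W = "\<lambda>\<pi>. \<exists>i. \<pi> i \<in> Sat G \<phi> t"])
      (simp_all add: Sat_def le_Vp_Ev_iff ReachW_iff)
  show "Vs G s (Ex A (Alw \<phi>)) \<ge> B1111 \<longleftrightarrow> p1wins G A (SafetyW (Sat G \<phi> B1111)) s"
    by (rule Ex_iff[where W = "\<lambda>\<pi>. \<forall>i. \<pi> i \<in> Sat G \<phi> B1111"])
      (simp_all add: Sat_def le_Vp_Alw_iff SafetyW_iff)
  show "Vs G s (Ex A (Alw \<phi>)) \<ge> B0111 \<longleftrightarrow> p1wins G A (coBuchiW (Sat G \<phi> B0111)) s"
    by (rule Ex_iff[where W = "\<lambda>\<pi>. \<exists>i. \<forall>j\<ge>i. \<pi> j \<in> Sat G \<phi> B0111"])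
      (simp_all add: Sat_def le_Vp_Alw_iff coBuchiW_iff)
  show "Vs G s (Ex A (Alw \<phi>)) \<ge> B0011 \<longleftrightarrow> p1wins G A (BuchiW (Sat G \<phi> B0011)) s"
    by (rule Ex_iff[where W = "\<lambda>\<pi>. \<forall>i. \<exists>j\<ge>i. \<pi> j \<in> Sat G \<phi> B0011"])
      (simp_all add: Sat_def le_Vp_Alw_iff BuchiW_iff)
  show "Vs G s (Ex A (Alw \<phi>)) \<ge> B0001 \<longleftrightarrow> p1wins G A (ReachW (Sat G \<phi> B0001)) s"
    by (rule Ex_iff[where W = "\<lambda>\<pi>. \<exists>i. \<pi> i \<in> Sat G \<phi> B0001"])
      (simp_all add: Sat_def le_Vp_Alw_iff ReachW_iff)
  show "Vs G s (All A (Nxt \<phi>)) \<ge> t \<longleftrightarrow> \<not> p1wins G A (NextW (cSt G - Sat G \<phi> t)) s"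
    by (rule le_Vs_All_iff_not_p1wins[OF assms(1,2,4), where W = "\<lambda>\<pi>. \<pi> 1 \<in> cSt G - Sat G \<phi> t"])
      (simp_all add: Sat_def Vp_Nxt NextW_iff)
qed

end
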